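(* Let $\alpha\in\mathbb{Q}(i)\setminus\mathbb{R}$ with $|\alpha|>1$, with minimal primitive polynomial $P_\alpha(X)=a_2X^2+a_1X+a_0$ ($a_0,a_1,a_2\in\mathbb{Z}$ coprime, $a_2>0$, $P_\alpha(\alpha)=0$), $\mathcal{D}=\{0,\ldots,|a_0|-1\}$ and $\Lambda_\alpha=\mathbb{Z}[\alpha]\cap\alpha^{-1}\mathbb{Z}[\alpha^{-1}]$. If $N\in\Lambda_\alpha\setminus\{0\}$ has an integer $\alpha$-expansion $N=\sum_{j=0}^k d_j\alpha^j$ ($d_j\in\mathcal{D}$, $d_k\ne0$), then $$k=\log_{|\alpha|}(|N|)+\mathcal{O}(1),$$ where the implied constant depends only on $\alpha$.
   Context: For $x\in\Lambda_\alpha$ there is a unique $d\in\mathcal{D}$ with $(x-d)/\alpha\in\Lambda_\alpha$, and $T_\alpha(x)=(x-d)/\alpha$. For $N=N_0\in\Lambda_\alpha$ let $N_{j+1}=T_\alpha(N_j)$ and $d_j$ be defined by $N_j=\alpha N_{j+1}+d_j$; if $k$ is minimal with $N_{k+1}=0$, then $N=\sum_{j=0}^k d_j\alpha^j$ is the integer $\alpha$-expansion of $N$. *)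

theory Defs
  imports Complex_Main
begin

definition Zpoly :: "complex \<Rightarrow> complex set" where
  "Zpoly \<alpha> = {z. \<exists>(n::nat) (c::nat \<Rightarrow> int). z = (\<Sum>j<n. of_int (c j) * \<alpha> ^ j)}"

definition invZpoly :: "complex \<Rightarrow> complex set" where
  "invZpoly \<alpha> = {z. \<exists>(n::nat) (c::nat \<Rightarrow> int). z = (\<Sum>j=1..n. of_int (c j) * (inverse \<alpha>) ^ j)}"

definition Lambda :: "complex \<Rightarrow> complex set" where
  "Lambda \<alpha> = Zpoly \<alpha> \<inter> invZpoly \<alpha>"

definition digits :: "int \<Rightarrow> int set" where
  "digits a0 = {0..\<bar>a0\<bar> - 1}"

definition Tdigit :: "int \<Rightarrow> complex \<Rightarrow> complex \<Rightarrow> int" where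
  "Tdigit a0 \<alpha> x = (THE d. d \<in> digits a0 \<and> (x - of_int d) / \<alpha> \<in> Lambda \<alpha>)"

definition Tmap :: "int \<Rightarrow> complex \<Rightarrow> complex \<Rightarrow> complex" where
  "Tmap a0 \<alpha> x = (x - of_int (Tdigit a0 \<alpha> x)) / \<alpha>"

definition orbit :: "int \<Rightarrow> complex \<Rightarrow> complex \<Rightarrow> nat \<Rightarrow> complex" where
  "orbit a0 \<alpha> N j = (Tmap a0 \<alpha> ^^ j) N"

definition expdigit :: "int \<Rightarrow> complex \<Rightarrow> complex \<Rightarrow> nat \<Rightarrow> complex" where
  "expdigit a0 \<alpha> N j = orbit a0 \<alpha> N j - \<alpha> * orbit a0 \<alpha> N (Suc j)"

end

theory Submission
  imports Defs
begin

text \<open>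
  Put \<open>y = a\<^sub>2 \<alpha>\<close> and \<open>z = a\<^sub>0 / \<alpha> = -a\<^sub>1 - y\<close>, the roots of
  \<open>X\<^sup>2 + a\<^sub>1 X + a\<^sub>0 a\<^sub>2\<close>, so that \<open>\<int> + \<int> y\<close> is a ring containing both.
  An element of \<open>\<int>[\<alpha>]\<close> is carried into this ring by multiplication with high powers of
  \<open>a\<^sub>2\<close> and of \<open>z\<close>, an element of \<open>\<int>[\<alpha>\<inverse>]\<close> by high powers of \<open>a\<^sub>0\<close> and of
  \<open>y\<close>; an element of both is then also carried into it by a power of \<open>a\<^sub>1 = -(y + z)\<close>,
  and since these three integer multipliers are coprime it lies in \<open>\<int> + \<int> y\<close> itself.

  The orbit satisfies \<open>N\<^sub>j = \<alpha> N\<^sub>j\<^sub>+\<^sub>1 + d\<^sub>j\<close> with integer digits, so it lies in \<open>\<int>[\<alpha>]\<close>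
  (backwards from \<open>N\<^sub>k\<^sub>+\<^sub>1 = 0\<close>) and in \<open>\<int>[\<alpha>\<inverse>]\<close> (forwards from \<open>N\<close>), hence in this
  lattice, which is discrete because \<open>\<alpha>\<close> is not real. Summing the digits gives
  \<open>|N| \<le> C |\<alpha>|\<^sup>k\<close>. Conversely \<open>|\<alpha>|\<^sup>j |N\<^sub>j| \<le> |N| + |a\<^sub>0| |\<alpha>|\<^sup>j / (|\<alpha>| - 1)\<close>, so
  the \<open>N\<^sub>j\<close> with \<open>|\<alpha>|\<^sup>j \<ge> |N|\<close> lie in a fixed disc, and they are distinct because an
  orbit of \<open>T\<^sub>\<alpha>\<close> that reaches \<open>0\<close> cannot cycle before; if that disc contains \<open>K\<close> lattice
  points, then \<open>|\<alpha>|\<^sup>k\<^sup>-\<^sup>K < |N|\<close>.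
\<close>

lemma Zpoly_intro: "x = (\<Sum>j<n. of_int (c j) * g ^ j) \<Longrightarrow> x \<in> Zpoly g"
  unfolding Zpoly_def by blast

lemma Zpoly_of_int: "of_int d \<in> Zpoly g"
  by (rule Zpoly_intro[where n = 1 and c = "\<lambda>_. d"]) simp

lemma Zpoly_add:
  assumes "x \<in> Zpoly g" "w \<in> Zpoly g"
  shows "x + w \<in> Zpoly g"
proof -
  obtain n c m e where x: "x = (\<Sum>j<n. of_int (c j) * g ^ j)"
    and w: "w = (\<Sum>j<m. of_int (e j) * g ^ j)"
    using assms unfolding Zpoly_def by blast
  have pad: "(\<Sum>j<n. of_int (f j) * g ^ j) = (\<Sum>j<n + m. of_int (if j < n then f j else 0) * g ^ j)"
    for f :: "nat \<Rightarrow> int" and n m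
    by (rule sum.mono_neutral_cong_left) auto
  have "x + w
      = (\<Sum>j<n + m. of_int ((if j < n then c j else 0) + (if j < m then e j else 0)) * g ^ j)"
    unfolding x w pad[of c n m] pad[of e m n]
    by (simp add: add.commute[of m] distrib_right sum.distrib)
  then show ?thesis by (rule Zpoly_intro)
qed

lemma Zpoly_mult_base:
  assumes "x \<in> Zpoly g"
  shows "g * x \<in> Zpoly g"
proof -
  obtain n c where x: "x = (\<Sum>j<n. of_int (c j) * g ^ j)"
    using assms unfolding Zpoly_def by blast
  have "g * x = (\<Sum>j<Suc n. of_int (case j of 0 \<Rightarrow> 0 | Suc i \<Rightarrow> c i) * g ^ j)"
    unfolding x sum.lessThan_Suc_shift by (simp add: sum_distrib_left algebra_simps)
  then show ?thesis by (rule Zpoly_intro)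
qed

lemma invZpoly_subset_Zpoly_inverse: "invZpoly \<alpha> \<subseteq> Zpoly (inverse \<alpha>)"
proof
  fix x assume "x \<in> invZpoly \<alpha>"
  then obtain n c where x: "x = (\<Sum>j=1..n. of_int (c j) * inverse \<alpha> ^ j)"
    unfolding invZpoly_def by blast
  have "x = (\<Sum>j<Suc n. of_int (if j = 0 then 0 else c j) * inverse \<alpha> ^ j)"
    unfolding x sum.lessThan_Suc_shift by (simp add: sum.atLeast1_atMost_eq)
  then show "x \<in> Zpoly (inverse \<alpha>)" by (rule Zpoly_intro)
qed

definition Zlat :: "complex \<Rightarrow> complex set" where
  "Zlat t = {of_int r + of_int s * t | r s. True}"

lemma Zlat_of_int: "of_int r \<in> Zlat t"
  unfolding Zlat_def by (rule CollectI, intro exI[of _ r] exI[of _ 0]) simp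

lemma Zlat_self: "t \<in> Zlat t"
  unfolding Zlat_def by (rule CollectI, intro exI[of _ 0] exI[of _ 1]) simp

lemma Zlat_add:
  assumes "a \<in> Zlat t" "b \<in> Zlat t"
  shows "a + b \<in> Zlat t"
proof -
  obtain r s r' s' where "a = of_int r + of_int s * t" "b = of_int r' + of_int s' * t"
    using assms unfolding Zlat_def by blast
  then have "a + b = of_int (r + r') + of_int (s + s') * t"
    by (simp add: algebra_simps)
  then show ?thesis unfolding Zlat_def by blast
qed

lemma Zlat_mult:
  assumes quadratic: "t * t = of_int p * t + of_int q" and "a \<in> Zlat t" "b \<in> Zlat t"
  shows "a * b \<in> Zlat t"
proof -
  obtain r s r' s' where ab: "a = of_int r + of_int s * t" "b = of_int r' + of_int s' * t"
    using assms unfolding Zlat_def by blast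
  have "a * b = of_int (r * r') + of_int (r * s' + s * r') * t + of_int (s * s') * (t * t)"
    unfolding ab by (simp add: algebra_simps)
  also have "\<dots> = of_int (r * r' + s * s' * q) + of_int (r * s' + s * r' + s * s' * p) * t"
    unfolding quadratic by (simp add: algebra_simps)
  finally show ?thesis unfolding Zlat_def by blast
qed

lemma Zlat_of_int_mult:
  assumes "a \<in> Zlat t"
  shows "of_int m * a \<in> Zlat t"
proof -
  obtain r s where "a = of_int r + of_int s * t"
    using assms unfolding Zlat_def by blast
  then have "of_int m * a = of_int (m * r) + of_int (m * s) * t"
    by (simp add: algebra_simps)
  then show ?thesis unfolding Zlat_def by blast
qed

lemma Zlat_sum: "(\<And>i. i \<in> A \<Longrightarrow> f i \<in> Zlat t) \<Longrightarrow> sum f A \<in> Zlat t"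
  by (induction A rule: infinite_finite_induct)
    (simp_all add: Zlat_add Zlat_of_int[of 0, simplified])

lemma Zlat_power:
  assumes "t * t = of_int p * t + of_int q" "a \<in> Zlat t"
  shows "a ^ n \<in> Zlat t"
  by (induction n) (simp_all add: Zlat_of_int[of 1, simplified] Zlat_mult[OF assms(1) assms(2)])

lemma Zpoly_multiples_in_Zlat:
  assumes quadratic: "t * t = of_int p * t + of_int q"
    and "of_int a * \<alpha> \<in> Zlat t" "w \<in> Zlat t" "\<alpha> * w = of_int b"
    and "x \<in> Zpoly \<alpha>"
  shows "\<exists>n. of_int (a ^ n) * x \<in> Zlat t \<and> w ^ n * x \<in> Zlat t"
proof -
  obtain n c where x: "x = (\<Sum>i<n. of_int (c i) * \<alpha> ^ i)"
    using assms(5) unfolding Zpoly_def by blast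
  have "of_int (a ^ n) * \<alpha> ^ i = of_int (a ^ (n - i)) * (of_int a * \<alpha>) ^ i"
    and "w ^ n * \<alpha> ^ i = of_int (b ^ i) * w ^ (n - i)" if "i < n" for i
  proof -
    have n: "n = i + (n - i)"
      using that by simp
    show "of_int (a ^ n) * \<alpha> ^ i = of_int (a ^ (n - i)) * (of_int a * \<alpha>) ^ i"
      by (subst n) (simp add: power_add power_mult_distrib mult_ac)
    show "w ^ n * \<alpha> ^ i = of_int (b ^ i) * w ^ (n - i)"
      by (subst n) (simp add: power_add power_mult_distrib mult_ac flip: assms(4))
  qed
  then have sums: "of_int (a ^ n) * x = (\<Sum>i<n. of_int (c i * a ^ (n - i)) * (of_int a * \<alpha>) ^ i)"
      "w ^ n * x = (\<Sum>i<n. of_int (c i * b ^ i) * w ^ (n - i))"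
    unfolding x sum_distrib_left by (auto intro!: sum.cong simp: mult.left_commute)
  have "of_int (a ^ n) * x \<in> Zlat t"
    unfolding sums(1) by (intro Zlat_sum Zlat_of_int_mult Zlat_power[OF quadratic assms(2)])
  moreover have "w ^ n * x \<in> Zlat t"
    unfolding sums(2) by (intro Zlat_sum Zlat_of_int_mult Zlat_power[OF quadratic assms(3)])
  ultimately show ?thesis
    by blast
qed

lemma Zlat_binomial_multiple:
  assumes quadratic: "t * t = of_int p * t + of_int q"
    and "u \<in> Zlat t" "v \<in> Zlat t" "u ^ m * x \<in> Zlat t" "v ^ n * x \<in> Zlat t"
  shows "(u + v) ^ (m + n) * x \<in> Zlat t"
proof -
  have "u ^ i * v ^ (m + n - i) * x \<in> Zlat t" for i
  proof (cases "m \<le> i")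
    case True
    then have "u ^ i * v ^ (m + n - i) * x = (u ^ m * x) * u ^ (i - m) * v ^ (m + n - i)"
      by (simp add: mult_ac flip: power_add)
    also have "\<dots> \<in> Zlat t"
      by (intro Zlat_mult[OF quadratic] Zlat_power[OF quadratic] assms)
    finally show ?thesis .
  next
    case False
    then have "m + n - i = n + (m - i)"
      by simp
    then have "u ^ i * v ^ (m + n - i) * x = (v ^ n * x) * u ^ i * v ^ (m - i)"
      by (simp add: mult_ac power_add)
    also have "\<dots> \<in> Zlat t"
      by (intro Zlat_mult[OF quadratic] Zlat_power[OF quadratic] assms)
    finally show ?thesis .
  qed
  then have "(\<Sum>i\<le>m + n. of_int (int (m + n choose i)) * (u ^ i * v ^ (m + n - i) * x)) \<in> Zlat t"
    by (intro Zlat_sum Zlat_of_int_mult)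
  then show ?thesis
    by (simp add: binomial_ring sum_distrib_left sum_distrib_right mult_ac)
qed

lemma Zlat_of_coprime_multiples:
  assumes "of_int a * x \<in> Zlat t" "of_int b * x \<in> Zlat t" "of_int c * x \<in> Zlat t"
    and "gcd a (gcd b c) = 1"
  shows "x \<in> Zlat t"
proof -
  obtain u v u' v' where bezout: "u * a + v * gcd b c = 1" "u' * b + v' * c = gcd b c"
    using bezout_int[of a "gcd b c"] bezout_int[of b c] assms(4) by auto
  have "u * a + (v * u') * b + (v * v') * c = 1"
    using bezout by (simp add: algebra_simps flip: bezout(2))
  then have "x = of_int u * (of_int a * x) + of_int (v * u') * (of_int b * x)
      + of_int (v * v') * (of_int c * x)"
    by (metis (no_types, lifting) distrib_right mult.assoc mult_1 of_int_1 of_int_add of_int_mult)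
  then show ?thesis
    by (metis assms(1-3) Zlat_add Zlat_of_int_mult)
qed

lemma gcd_power_eq_1:
  fixes a b c :: int
  assumes "gcd a (gcd b c) = 1"
  shows "gcd (a ^ i) (gcd (b ^ j) (c ^ l)) = 1"
proof -
  have power: "gcd (x ^ k) (gcd y z) = 1" if "gcd x (gcd y z) = 1" for x y z :: int and k
    using that by (simp flip: coprime_iff_gcd_eq_1)
  have rotate: "gcd x (gcd y z) = gcd y (gcd z x)" for x y z :: int
    by (simp add: ac_simps)
  show ?thesis
    using power[OF power[OF power[OF assms, unfolded rotate], unfolded rotate], unfolded rotate] .
qed

lemma Zpoly_Int_Zpoly_inverse_subset_Zlat:
  fixes \<alpha> :: complex and a0 a1 a2 :: int
  assumes root: "of_int a2 * \<alpha>\<^sup>2 + of_int a1 * \<alpha> + of_int a0 = 0"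
    and "\<alpha> \<noteq> 0" and coprime: "gcd a0 (gcd a1 a2) = 1"
  shows "Zpoly \<alpha> \<inter> Zpoly (inverse \<alpha>) \<subseteq> Zlat (of_int a2 * \<alpha>)"
proof
  fix x assume x: "x \<in> Zpoly \<alpha> \<inter> Zpoly (inverse \<alpha>)"
  define y where "y = of_int a2 * \<alpha>"
  define z where "z = - of_int a1 - y"
  have "y * y - (of_int (- a1) * y + of_int (- a0 * a2))
      = of_int a2 * (of_int a2 * \<alpha>\<^sup>2 + of_int a1 * \<alpha> + of_int a0)"
    by (simp add: y_def algebra_simps power2_eq_square)
  then have quadratic: "y * y = of_int (- a1) * y + of_int (- a0 * a2)"
    using root by simp
  have "\<alpha> * z - of_int a0 = - (of_int a2 * \<alpha>\<^sup>2 + of_int a1 * \<alpha> + of_int a0)"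
    by (simp add: z_def y_def algebra_simps power2_eq_square)
  then have z_root: "\<alpha> * z = of_int a0"
    using root by simp
  have y: "y \<in> Zlat y"
    by (rule Zlat_self)
  have z: "z \<in> Zlat y"
    unfolding z_def Zlat_def by (rule CollectI, intro exI[of _ "- a1"] exI[of _ "- 1"]) simp
  have "of_int a2 * \<alpha> \<in> Zlat y"
    unfolding y_def[symmetric] by (rule Zlat_self)
  then obtain n where n: "of_int (a2 ^ n) * x \<in> Zlat y" "z ^ n * x \<in> Zlat y"
    using Zpoly_multiples_in_Zlat[OF quadratic _ z z_root] x by blast
  have "of_int a0 * inverse \<alpha> = z" "inverse \<alpha> * y = of_int a2"
    using \<open>\<alpha> \<noteq> 0\<close> z_root by (auto simp: y_def field_simps)
  then obtain m where m: "of_int (a0 ^ m) * x \<in> Zlat y" "y ^ m * x \<in> Zlat y"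
    using Zpoly_multiples_in_Zlat[OF quadratic _ y, of a0 "inverse \<alpha>" a2 x] x z by auto
  have a1: "of_int ((- a1) ^ (m + n)) * x \<in> Zlat y"
    using Zlat_binomial_multiple[OF quadratic y z m(2) n(2)] by (simp add: z_def)
  have "gcd (a2 ^ n) (gcd (a0 ^ m) ((- a1) ^ (m + n))) = 1"
    using coprime by (intro gcd_power_eq_1) (simp add: ac_simps)
  then show "x \<in> Zlat (of_int a2 * \<alpha>)"
    unfolding y_def[symmetric] by (rule Zlat_of_coprime_multiples[OF n(1) m(1) a1])
qed

lemma finite_Zlat_norm_le:
  assumes "Im t \<noteq> 0"
  shows "finite {w \<in> Zlat t. cmod w \<le> R}"
proof -
  define A where "A = \<lceil>R / \<bar>Im t\<bar>\<rceil>"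
  define B where "B = \<lceil>R + A * \<bar>Re t\<bar>\<rceil>"
  have "{w \<in> Zlat t. cmod w \<le> R} \<subseteq> (\<lambda>(r, s). of_int r + of_int s * t) ` ({-B..B} \<times> {-A..A})"
  proof safe
    fix w assume "w \<in> Zlat t" and R: "cmod w \<le> R"
    then obtain r s where w: "w = of_int r + of_int s * t"
      unfolding Zlat_def by blast
    have "\<bar>s\<bar> * \<bar>Im t\<bar> \<le> R"
      using abs_Im_le_cmod[of w] R by (simp add: w abs_mult)
    then have "\<bar>s\<bar> \<le> R / \<bar>Im t\<bar>"
      using assms by (simp add: le_divide_eq)
    then have s: "\<bar>s\<bar> \<le> A"
      unfolding A_def by linarith
    have "\<bar>r + s * Re t\<bar> \<le> R"
      using abs_Re_le_cmod[of w] R by (simp add: w)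
    moreover have "\<bar>s * Re t\<bar> \<le> A * \<bar>Re t\<bar>"
      using s by (simp add: abs_mult mult_right_mono)
    ultimately have "\<bar>r\<bar> \<le> B"
      unfolding B_def by linarith
    with s w show "w \<in> (\<lambda>(r, s). of_int r + of_int s * t) ` ({-B..B} \<times> {-A..A})"
      by force
  qed
  then show ?thesis
    by (rule finite_subset) simp
qed

lemma Zlat_norm_ge:
  assumes "Im t \<noteq> 0" "w \<in> Zlat t" "w \<noteq> 0"
  shows "min 1 \<bar>Im t\<bar> \<le> cmod w"
proof -
  obtain r s where w: "w = of_int r + of_int s * t"
    using assms(2) unfolding Zlat_def by blast
  show ?thesis
  proof (cases "s = 0")
    case True
    then have "1 \<le> cmod w"
      using w assms(3) by simp
    then show ?thesis
      by linarith
  next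
    case False
    then have "1 \<le> \<bar>s\<bar>"
      by linarith
    then have "\<bar>Im t\<bar> \<le> \<bar>s\<bar> * \<bar>Im t\<bar>"
      by (simp add: mult_le_cancel_right1 flip: of_int_abs)
    also have "\<dots> \<le> cmod w"
      using abs_Im_le_cmod[of w] by (simp add: w abs_mult)
    finally show ?thesis
      by linarith
  qed
qed

lemma expansion_of_recurrence:
  fixes x e :: "nat \<Rightarrow> 'a::comm_ring_1"
  assumes "\<And>j. x j = \<alpha> * x (Suc j) + e j"
  shows "x 0 = \<alpha> ^ j * x j + (\<Sum>i<j. e i * \<alpha> ^ i)"
proof (induction j)
  case 0
  then show ?case
    by simp
next
  case (Suc j)
  then show ?case
    by (subst (asm) assms[of j]) (simp add: algebra_simps)
qed

lemma Zpoly_of_recurrence: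
  assumes recurrence: "\<And>j. x j = \<alpha> * x (Suc j) + e j"
    and digits: "\<And>j. j \<le> k \<Longrightarrow> e j \<in> \<int>" and last: "x (Suc k) \<in> Zpoly \<alpha>" and "j \<le> Suc k"
  shows "x j \<in> Zpoly \<alpha>"
  using \<open>j \<le> Suc k\<close>
proof (induction j rule: inc_induct)
  case base
  show ?case
    by (fact last)
next
  case (step j)
  obtain d where "e j = of_int d"
    using digits[of j] step.hyps(2) by (auto elim: Ints_cases)
  then have "x j = \<alpha> * x (Suc j) + of_int d"
    using recurrence[of j] by simp
  then show ?case
    using step.IH by (simp add: Zpoly_add Zpoly_mult_base Zpoly_of_int)
qed

lemma Zpoly_inverse_of_recurrence:
  assumes "\<alpha> \<noteq> 0" and recurrence: "\<And>j. x j = \<alpha> * x (Suc j) + e j"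
    and digits: "\<And>j. j \<le> k \<Longrightarrow> e j \<in> \<int>" and first: "x 0 \<in> Zpoly (inverse \<alpha>)" and "j \<le> Suc k"
  shows "x j \<in> Zpoly (inverse \<alpha>)"
  using \<open>j \<le> Suc k\<close>
proof (induction j)
  case 0
  show ?case
    by (fact first)
next
  case (Suc j)
  obtain d where "e j = of_int d"
    using digits[of j] Suc.prems by (auto elim: Ints_cases)
  then have "x (Suc j) = inverse \<alpha> * (x j + of_int (- d))"
    using recurrence[of j] \<open>\<alpha> \<noteq> 0\<close> by (simp add: field_simps)
  also have "\<dots> \<in> Zpoly (inverse \<alpha>)"
    using Suc by (intro Zpoly_mult_base Zpoly_add Zpoly_of_int) simp
  finally show ?case .
qed

lemma Zlat_of_recurrence:
  fixes \<alpha> :: complex and a0 a1 a2 :: int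
  assumes root: "of_int a2 * \<alpha>\<^sup>2 + of_int a1 * \<alpha> + of_int a0 = 0"
    and "\<alpha> \<noteq> 0" and coprime: "gcd a0 (gcd a1 a2) = 1"
    and recurrence: "\<And>j. x j = \<alpha> * x (Suc j) + e j" and digits: "\<And>j. j \<le> k \<Longrightarrow> e j \<in> \<int>"
    and "x (Suc k) = 0" and "x 0 \<in> invZpoly \<alpha>" and "j \<le> Suc k"
  shows "x j \<in> Zlat (of_int a2 * \<alpha>)"
proof -
  have "x (Suc k) \<in> Zpoly \<alpha>"
    using Zpoly_of_int[of 0] \<open>x (Suc k) = 0\<close> by simp
  then have in_Zpoly: "x j \<in> Zpoly \<alpha>"
    using Zpoly_of_recurrence recurrence digits \<open>j \<le> Suc k\<close> by blast
  have "x 0 \<in> Zpoly (inverse \<alpha>)"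
    using \<open>x 0 \<in> invZpoly \<alpha>\<close> invZpoly_subset_Zpoly_inverse by blast
  then have "x j \<in> Zpoly (inverse \<alpha>)"
    using Zpoly_inverse_of_recurrence[of \<alpha> x e k j] \<open>\<alpha> \<noteq> 0\<close> recurrence digits \<open>j \<le> Suc k\<close>
    by blast
  with in_Zpoly show ?thesis
    using Zpoly_Int_Zpoly_inverse_subset_Zlat[OF root \<open>\<alpha> \<noteq> 0\<close> coprime] by blast
qed

lemma inj_on_funpow_before_hitting:
  fixes f :: "'a \<Rightarrow> 'a"
  assumes "(f ^^ Suc k) x = c" "\<And>j. j < k \<Longrightarrow> (f ^^ Suc j) x \<noteq> c"
  shows "inj_on (\<lambda>j. (f ^^ j) x) {..k}"
proof (rule linorder_inj_onI')
  fix i j assume "i \<in> {..k}" "j \<in> {..k}" "i < j"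
  show "(f ^^ i) x \<noteq> (f ^^ j) x"
  proof
    assume "(f ^^ i) x = (f ^^ j) x"
    then have "(f ^^ (Suc k - j + i)) x = (f ^^ (Suc k - j + j)) x"
      by (simp add: funpow_add)
    moreover have "Suc k - j + i = Suc (i + k - j)" "Suc k - j + j = Suc k"
      using \<open>i < j\<close> \<open>j \<in> {..k}\<close> by auto
    ultimately have "(f ^^ Suc (i + k - j)) x = c"
      using assms(1) by simp
    then show False
      using assms \<open>i < j\<close> \<open>j \<in> {..k}\<close> by simp
  qed
qed

lemma norm_sum_digits_le:
  fixes \<alpha> :: "'a::real_normed_field"
  assumes "norm \<alpha> > 1" "B \<ge> 0" "\<And>i. i < j \<Longrightarrow> norm (e i) \<le> B"
  shows "norm (\<Sum>i<j. e i * \<alpha> ^ i) \<le> B * norm \<alpha> ^ j / (norm \<alpha> - 1)"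
proof -
  have "norm (\<Sum>i<j. e i * \<alpha> ^ i) \<le> (\<Sum>i<j. B * norm \<alpha> ^ i)"
    using assms(3) by (intro sum_norm_le) (simp add: norm_mult norm_power mult_right_mono)
  also have "\<dots> = B * ((norm \<alpha> ^ j - 1) / (norm \<alpha> - 1))"
    using assms(1) by (simp add: sum_distrib_left[symmetric] geometric_sum)
  also have "\<dots> \<le> B * (norm \<alpha> ^ j / (norm \<alpha> - 1))"
    using assms(1,2) by (intro divide_right_mono mult_left_mono) auto
  finally show ?thesis
    by simp
qed

lemma norm_recurrence_le:
  fixes \<alpha> :: "'a::real_normed_field"
  assumes "norm \<alpha> > 1" "B \<ge> 0" "\<And>j. x j = \<alpha> * x (Suc j) + e j" "\<And>i. i < j \<Longrightarrow> norm (e i) \<le> B"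
  shows "norm \<alpha> ^ j * norm (x j) \<le> norm (x 0) + B * norm \<alpha> ^ j / (norm \<alpha> - 1)"
proof -
  have "x 0 = \<alpha> ^ j * x j + (\<Sum>i<j. e i * \<alpha> ^ i)"
    by (rule expansion_of_recurrence) (rule assms(3))
  then have "\<alpha> ^ j * x j = x 0 - (\<Sum>i<j. e i * \<alpha> ^ i)"
    by (simp add: algebra_simps)
  then have "norm \<alpha> ^ j * norm (x j) = norm (x 0 - (\<Sum>i<j. e i * \<alpha> ^ i))"
    by (simp flip: norm_mult norm_power)
  also have "\<dots> \<le> norm (x 0) + norm (\<Sum>i<j. e i * \<alpha> ^ i)"
    by (rule norm_triangle_ineq4)
  finally show ?thesis
    using norm_sum_digits_le[of \<alpha> B j e, OF assms(1,2,4)] by simp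
qed

lemma abs_diff_log_le:
  assumes "1 < b" "0 < x" "b ^ k \<le> C * x" "x \<le> D * b ^ k"
  shows "\<bar>real k - log b x\<bar> \<le> \<bar>log b C\<bar> + \<bar>log b D\<bar>"
proof -
  have "0 < b ^ k"
    using assms(1) by simp
  then have "0 < C * x"
    using assms(3) by linarith
  then have "0 < C"
    using zero_less_mult_pos2 assms(2) by blast
  have "0 < D"
    using zero_less_mult_pos2[of D "b ^ k"] \<open>0 < b ^ k\<close> assms(2,4) by linarith
  have "real k = log b (b ^ k)"
    using assms(1) by (simp add: log_nat_power)
  also have "\<dots> \<le> log b (C * x)"
    using log_le_cancel_iff[of b "b ^ k" "C * x"] assms(1,3) \<open>0 < b ^ k\<close> \<open>0 < C * x\<close> by simp
  also have "\<dots> = log b C + log b x"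
    using \<open>0 < C\<close> assms(2) by (simp add: log_mult)
  finally have "real k \<le> log b C + log b x" .
  moreover have "log b x \<le> log b (D * b ^ k)"
    using assms(1,2,4) by simp
  moreover have "log b (D * b ^ k) = log b D + real k"
    using \<open>0 < D\<close> assms(1) by (simp add: log_mult log_nat_power)
  ultimately show ?thesis
    by linarith
qed

lemma power_le_norm_of_injective_recurrence:
  fixes \<alpha> :: "'a::real_normed_field" and L :: "'a set" and B c :: real
  defines "S \<equiv> {w \<in> L. norm w \<le> 1 + B / (norm \<alpha> - 1)}"
  assumes "norm \<alpha> > 1" "B \<ge> 0" "finite S"
    and "0 < c" "c \<le> 1" and discrete: "\<And>w. w \<in> L \<Longrightarrow> w \<noteq> 0 \<Longrightarrow> c \<le> norm w"
    and recurrence: "\<And>j. x j = \<alpha> * x (Suc j) + e j" and digits: "\<And>j. j < k \<Longrightarrow> norm (e j) \<le> B"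
    and in_L: "\<And>j. j \<le> k \<Longrightarrow> x j \<in> L" and inj: "inj_on x {..k}" and "x 0 \<noteq> 0"
  shows "norm \<alpha> ^ k \<le> norm \<alpha> ^ card S / c * norm (x 0)"
proof -
  define r where "r = norm \<alpha>"
  have "r > 1"
    using \<open>norm \<alpha> > 1\<close> by (simp add: r_def)
  have "c \<le> norm (x 0)"
    using discrete in_L \<open>x 0 \<noteq> 0\<close> by simp
  have small: "x j \<in> S" if "norm (x 0) \<le> r ^ i" "i \<le> j" "j \<le> k" for i j
  proof -
    have "r ^ j * norm (x j) \<le> norm (x 0) + B * r ^ j / (r - 1)"
      unfolding r_def
      by (rule norm_recurrence_le[of \<alpha> B x e, OF \<open>norm \<alpha> > 1\<close> \<open>B \<ge> 0\<close> recurrence])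
        (use digits that in auto)
    also have "\<dots> \<le> r ^ j + B * r ^ j / (r - 1)"
      using that(1) power_increasing[OF that(2), of r] \<open>r > 1\<close> by linarith
    also have "\<dots> = r ^ j * (1 + B / (r - 1))"
      by (simp add: algebra_simps)
    finally have "norm (x j) \<le> 1 + B / (r - 1)"
      using \<open>r > 1\<close> by simp
    then show ?thesis
      using in_L that(3) unfolding S_def r_def by simp
  qed
  show ?thesis
  proof (cases "k < card S")
    case True
    then have "r ^ k \<le> r ^ card S * 1"
      using \<open>r > 1\<close> by (simp add: power_increasing)
    also have "\<dots> \<le> r ^ card S / c * norm (x 0)"
      using \<open>c \<le> norm (x 0)\<close> \<open>0 < c\<close> \<open>r > 1\<close> by (simp add: field_simps)
    finally show ?thesis
      unfolding r_def .
  next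
    case False
    define i where "i = k - card S"
    have "r ^ i < norm (x 0)"
    proof (rule ccontr)
      assume "\<not> r ^ i < norm (x 0)"
      then have "x ` {i..k} \<subseteq> S"
        using small by force
      moreover have "inj_on x {i..k}"
        using inj by (rule inj_on_subset) auto
      ultimately have "card {i..k} \<le> card S"
        using card_inj_on_le \<open>finite S\<close> by blast
      then show False
        using False unfolding i_def by simp
    qed
    have "r ^ k = r ^ i * r ^ card S"
      using False by (simp add: i_def flip: power_add)
    also have "\<dots> < norm (x 0) * r ^ card S"
      using \<open>r ^ i < norm (x 0)\<close> \<open>r > 1\<close> by simp
    also have "\<dots> \<le> r ^ card S / c * norm (x 0)"
      using \<open>0 < c\<close> \<open>c \<le> 1\<close> \<open>r > 1\<close> by (simp add: field_simps mult_left_le_one_le)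
    finally show ?thesis
      unfolding r_def by simp
  qed
qed

lemma integer_expansion_length_bound:
  fixes \<alpha> :: complex and a0 a1 a2 :: int
  defines "(r :: real) \<equiv> cmod \<alpha>"
    and "S \<equiv> {w \<in> Zlat (of_int a2 * \<alpha>). cmod w \<le> 1 + of_int \<bar>a0\<bar> / (cmod \<alpha> - 1)}"
    and "c \<equiv> min 1 \<bar>of_int a2 * Im \<alpha>\<bar>"
  assumes root: "of_int a2 * \<alpha>\<^sup>2 + of_int a1 * \<alpha> + of_int a0 = 0"
    and coprime: "gcd a0 (gcd a1 a2) = 1" and "a2 \<noteq> 0" "Im \<alpha> \<noteq> 0" "r > 1"
    and recurrence: "\<And>j. x j = \<alpha> * x (Suc j) + e j"
    and digits: "\<And>j. j \<le> k \<Longrightarrow> e j \<in> of_int ` digits a0"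
    and "x (Suc k) = 0" "x 0 \<in> invZpoly \<alpha>" "x 0 \<noteq> 0" and inj: "inj_on x {..k}"
  shows "\<bar>real k - log r (cmod (x 0))\<bar>
    \<le> \<bar>log r (r ^ card S / c)\<bar> + \<bar>log r (of_int \<bar>a0\<bar> * r / (r - 1))\<bar>"
proof -
  define y where "y = of_int a2 * \<alpha>"
  have "\<alpha> \<noteq> 0" "Im y \<noteq> 0"
    using \<open>a2 \<noteq> 0\<close> \<open>Im \<alpha> \<noteq> 0\<close> \<open>r > 1\<close> by (auto simp: y_def r_def)
  have "c = min 1 \<bar>Im y\<bar>"
    by (simp add: c_def y_def)
  then have "0 < c" "c \<le> 1" "\<And>w. w \<in> Zlat y \<Longrightarrow> w \<noteq> 0 \<Longrightarrow> c \<le> cmod w"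
    using \<open>Im y \<noteq> 0\<close> Zlat_norm_ge by auto
  have "finite S"
    unfolding S_def y_def[symmetric] using \<open>Im y \<noteq> 0\<close> by (rule finite_Zlat_norm_le)
  have digit_bound: "e j \<in> \<int> \<and> cmod (e j) \<le> \<bar>a0\<bar>" if "j \<le> k" for j
    using digits[OF that] by (auto simp: digits_def)
  have "x j \<in> Zlat y" if "j \<le> k" for j
    unfolding y_def
    by (rule Zlat_of_recurrence[where x = x and e = e, OF root \<open>\<alpha> \<noteq> 0\<close> coprime recurrence])
      (use digit_bound \<open>x (Suc k) = 0\<close> \<open>x 0 \<in> invZpoly \<alpha>\<close> that in auto)
  then have "r ^ k \<le> r ^ card S / c * cmod (x 0)"
    using power_le_norm_of_injective_recurrence[where x = x and e = e and L = "Zlat y",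
        OF \<open>r > 1\<close>[unfolded r_def] _ \<open>finite S\<close>[unfolded S_def r_def y_def[symmetric]]
        \<open>0 < c\<close> \<open>c \<le> 1\<close> \<open>\<And>w. w \<in> Zlat y \<Longrightarrow> w \<noteq> 0 \<Longrightarrow> c \<le> cmod w\<close> recurrence]
      digit_bound inj \<open>x 0 \<noteq> 0\<close>
    by (simp add: S_def r_def y_def)
  moreover have "cmod (x 0) \<le> \<bar>a0\<bar> * r / (r - 1) * r ^ k"
  proof -
    have "x 0 = (\<Sum>j<Suc k. e j * \<alpha> ^ j)"
      using expansion_of_recurrence[of x \<alpha> e "Suc k", OF recurrence] \<open>x (Suc k) = 0\<close> by simp
    then show ?thesis
      using norm_sum_digits_le[of \<alpha> "\<bar>a0\<bar>" "Suc k" e] digit_bound \<open>r > 1\<close> by (simp add: r_def)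
  qed
  ultimately show ?thesis
    using abs_diff_log_le \<open>r > 1\<close> \<open>x 0 \<noteq> 0\<close> by simp
qed

theorem mainTheorem8:
  fixes \<alpha> :: complex and a0 a1 a2 :: int
  assumes "Re \<alpha> \<in> \<rat>" and "Im \<alpha> \<in> \<rat>" and "Im \<alpha> \<noteq> 0"
    and "cmod \<alpha> > 1"
    and "a2 > 0" and "gcd a0 (gcd a1 a2) = 1"
    and "of_int a2 * \<alpha>^2 + of_int a1 * \<alpha> + of_int a0 = 0"
  shows "\<exists>C::real. \<forall>(N::complex) (k::nat).
           N \<in> Lambda \<alpha> \<and> N \<noteq> 0
           \<and> orbit a0 \<alpha> N (Suc k) = 0 \<and> (\<forall>j<k. orbit a0 \<alpha> N (Suc j) \<noteq> 0)
           \<and> N = (\<Sum>j\<le>k. expdigit a0 \<alpha> N j * \<alpha> ^ j)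
           \<and> (\<forall>j\<le>k. expdigit a0 \<alpha> N j \<in> of_int ` digits a0)
           \<and> expdigit a0 \<alpha> N k \<noteq> 0
           \<longrightarrow> \<bar>real k - log (cmod \<alpha>) (cmod N)\<bar> \<le> C"
proof -
  define r where "r = cmod \<alpha>"
  define S where "S = {w \<in> Zlat (of_int a2 * \<alpha>). cmod w \<le> 1 + of_int \<bar>a0\<bar> / (r - 1)}"
  define c where "c = min 1 \<bar>of_int a2 * Im \<alpha>\<bar>"
  show ?thesis
  proof (rule exI[of _ "\<bar>log r (r ^ card S / c)\<bar> + \<bar>log r (of_int \<bar>a0\<bar> * r / (r - 1))\<bar>"],
      intro allI impI, elim conjE)
    fix N k
    assume N: "N \<in> Lambda \<alpha>" "N \<noteq> 0" and hit: "orbit a0 \<alpha> N (Suc k) = 0"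
      and before: "\<forall>j<k. orbit a0 \<alpha> N (Suc j) \<noteq> 0"
      and digits: "\<forall>j\<le>k. expdigit a0 \<alpha> N j \<in> of_int ` digits a0"
    have "inj_on (orbit a0 \<alpha> N) {..k}"
      unfolding orbit_def
      by (rule inj_on_funpow_before_hitting) (use hit before in \<open>auto simp: orbit_def\<close>)
    then show "\<bar>real k - log (cmod \<alpha>) (cmod N)\<bar>
        \<le> \<bar>log r (r ^ card S / c)\<bar> + \<bar>log r (of_int \<bar>a0\<bar> * r / (r - 1))\<bar>"
      using integer_expansion_length_bound[OF assms(7,6), of "orbit a0 \<alpha> N" "expdigit a0 \<alpha> N" k]
        assms(3-5) N hit digits
      by (auto simp: r_def S_def c_def expdigit_def orbit_def Lambda_def)
  qed
qed

end
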